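(* Fix $n$ and suppose that (i) $m_{n}>4/\sqrt{v_{n}}$ and (ii) $r_{n}\geq 4D_{n}/v_{n}^{2}$. Then $K_{n}^{\prime}(z)$ has no zeros inside the disc $\vert z\vert<1/\sqrt{v_{n}}-r_{n}$.
   Context: Let $(\mathcal{A},E)$ be a noncommutative probability space and, for each $n$, let $X_{n,1},\ldots,X_{n,k_n}$ be free, bounded, self-adjoint random variables with $E(X_{n,i})=0$ and $\Vert X_{n,i}\Vert\leq L_{n,i}$. Let $a_{n,i}^{(2)}$ be the second moment of $X_{n,i}$ and $v_n=a_{n,1}^{(2)}+\cdots+a_{n,k_n}^{(2)}$. Let $G_{n,i}(z)=\int\mu_{n,i}(dt)/(z-t)$ be the Cauchy transform of the spectral measure $\mu_{n,i}$ of $X_{n,i}$, and $g_{n,i}(z)=G_{n,i}(1/z)$. Let $R_{n,i},m_{n,i}$ be numbers such that: $R_{n,i}\geq L_{n,i}$; $\vert G_{n,i}(z)\vert\geq m_{n,i}>0$ everywhere on $\vert z\vert=R_{n,i}$; and $g_{n,i}$ has only one zero in $\vert z\vert<R_{n,i}^{-1}$ (e.g. $R_{n,i}=2L_{n,i}$, $m_{n,i}=(4L_{n,i})^{-1}$). Set $m_n=\min_i m_{n,i}$ and $D_n=\sum_{i=1}^{k_n}R_{n,i}(m_{n,i})^{-2}$. Let $S_n=X_{n,1}+\cdots+X_{n,k_n}$ and let $K_n(z)$ be the $K$-function of $S_n$, i.e. the functional inverse (near $0$) of the Cauchy transform of $S_n$; by Voiculescu's addition formula $K_n(z)=\sum_i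 K_{n,i}(z)-(k_n-1)/z$, where $K_{n,i}$ is the inverse of $G_{n,i}$. The Laurent series of $K_n$ converges in $0<\vert z\vert<m_n$, and $K_n$ has a simple pole at $0$ with $K_n(z)=1/z+v_n z+O(z^2)$. *)

theory Defs
  imports "HOL-Probability.Probability"
begin

definition cauchy_transform :: "real measure \<Rightarrow> complex \<Rightarrow> complex" where
  "cauchy_transform \<mu> z = integral\<^sup>L \<mu> (\<lambda>t. inverse (z - complex_of_real t))"

text \<open>g(w) = G(1/w), extended by its limit value 0 at w = 0.\<close>
definition gfun :: "real measure \<Rightarrow> complex \<Rightarrow> complex" where
  "gfun \<mu> w = (if w = 0 then 0 else cauchy_transform \<mu> (1 / w))"

text \<open>The K-function (inverse of G near 0) of a single variable: for 0 < |z| < m,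
  K(z) = 1/w where w is the unique solution of g(w) = z in |w| < 1/R.\<close>
definition Kfun :: "real measure \<Rightarrow> real \<Rightarrow> complex \<Rightarrow> complex" where
  "Kfun \<mu> R z = 1 / (THE w. cmod w < 1 / R \<and> gfun \<mu> w = z)"

text \<open>K-function of the free sum, via Voiculescu's addition formula.\<close>
definition Ksum :: "nat \<Rightarrow> (nat \<Rightarrow> real measure) \<Rightarrow> (nat \<Rightarrow> real) \<Rightarrow> complex \<Rightarrow> complex" where
  "Ksum k \<mu> R z = (\<Sum>i<k. Kfun (\<mu> i) (R i) z) - of_nat (k - 1) / z"

end

theory Submission
  imports Defs "HOL-Complex_Analysis.Complex_Analysis"
begin

lemma eventually_half_dist_real_interval:
  fixes z :: "nat \<Rightarrow> complex"
  assumes lim: "z \<longlonglongrightarrow> c" and c: "cmod c = R" and R: "0 < R" and outside: "\<And>n. R < cmod (z n)"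
  shows "\<forall>\<^sub>F n in sequentially. \<forall>t. \<bar>t\<bar> \<le> R \<longrightarrow>
           cmod (c - of_real t) / 2 \<le> cmod (z n - of_real t)"
proof (cases "Im c = 0")
  case False
  have "\<forall>\<^sub>F n in sequentially. dist (z n) c < \<bar>Im c\<bar> / 2"
    using lim False by (intro tendstoD) auto
  then show ?thesis
  proof eventually_elim
    case (elim n)
    show ?case
    proof (intro allI impI)
      fix t :: real
      have "\<bar>Im c\<bar> \<le> cmod (c - of_real t)"
        using abs_Im_le_cmod[of "c - of_real t"] by simp
      moreover have "cmod (c - of_real t) \<le> cmod (z n - of_real t) + cmod (z n - c)"
        using norm_triangle_ineq4[of "z n - of_real t" "z n - c"] by (simp add: algebra_simps)
      ultimately show "cmod (c - of_real t) / 2 \<le> cmod (z n - of_real t)"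
        using elim by (simp add: dist_norm)
    qed
  qed
next
  case True
  define x where "x = Re c"
  have cx: "c = of_real x" using True by (simp add: x_def complex_eq_iff)
  have ax: "\<bar>x\<bar> = R" using c cx by simp
  have "\<forall>\<^sub>F n in sequentially. dist (z n) c < R / 2"
    using lim R by (intro tendstoD) auto
  then show ?thesis
  proof eventually_elim
    case (elim n)
    show ?case
    proof (intro allI impI)
      fix t :: real assume t: "\<bar>t\<bar> \<le> R"
      have "cmod (z n) \<le> cmod (z n - of_real t) + \<bar>t\<bar>"
        using norm_triangle_ineq4[of "z n - of_real t" "- of_real t"] by simp
      moreover have "cmod (c - of_real t) \<le> cmod (z n - of_real t) + cmod (z n - c)"
        using norm_triangle_ineq4[of "z n - of_real t" "z n - c"] by (simp add: algebra_simps)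
      moreover have "cmod (c - of_real t) = \<bar>x - t\<bar>"
        unfolding cx by (metis norm_of_real of_real_diff)
      moreover have "\<bar>x - t\<bar> = R - \<bar>t\<bar> \<or> R \<le> \<bar>x - t\<bar>"
        using ax t by linarith
      ultimately show "cmod (c - of_real t) / 2 \<le> cmod (z n - of_real t)"
        using outside[of n] elim unfolding dist_norm by linarith
    qed
  qed
qed

lemma ex1_of_sum_eq_1:
  fixes n :: "'a \<Rightarrow> int"
  assumes "finite Z" "(\<Sum>p\<in>Z. n p) = 1" "\<And>p. p \<in> Z \<Longrightarrow> 1 \<le> n p"
  shows "\<exists>!p. p \<in> Z"
proof -
  have "int (card Z) = (\<Sum>p\<in>Z. 1)" by simp
  also have "\<dots> \<le> (\<Sum>p\<in>Z. n p)" by (rule sum_mono) (rule assms(3))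
  also have "\<dots> = 1" by (rule assms(2))
  finally have "int (card Z) \<le> 1" .
  moreover have "Z \<noteq> {}" using assms(2) by auto
  then have "card Z \<noteq> 0" using assms(1) by simp
  ultimately have "card Z = 1" by linarith
  then obtain p where "Z = {p}" by (rule card_1_singletonE)
  then show ?thesis by simp
qed

lemma zorder_pos_of_finite_zeros:
  fixes g :: "complex \<Rightarrow> complex"
  assumes "g holomorphic_on S" "open S" "finite {p \<in> S. g p = 0}" "p \<in> S" "g p = 0"
  shows "1 \<le> zorder g p"
proof -
  have "\<forall>\<^sub>F y in at p. y \<notin> {p \<in> S. g p = 0}"
    using islimpt_finite[OF assms(3)] by (simp add: islimpt_iff_eventually)
  moreover have "\<forall>\<^sub>F y in at p. y \<in> S"
    using assms(2,4) by (rule eventually_at_in_open')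
  ultimately have "\<forall>\<^sub>F y in at p. g y \<noteq> 0"
    by eventually_elim auto
  then have "frequently (\<lambda>y. g y \<noteq> 0) (at p)"
    by (rule eventually_frequently[rotated]) simp
  then have "0 < zorder g p"
    using zorder_pos_iff[OF assms(1,2,4)] assms(5) by blast
  then show ?thesis by simp
qed

lemma finite_preimage_cball:
  fixes f :: "complex \<Rightarrow> complex"
  assumes holo: "f holomorphic_on ball 0 r" and zeros: "{w \<in> ball 0 r. f w = 0} = {0}" and "\<rho> < r"
  shows "finite {p \<in> cball 0 \<rho>. f p + - z = 0}"
proof (rule holomorphic_compact_finite_zeros)
  show "(\<lambda>p. f p + - z) holomorphic_on ball 0 r" by (intro holomorphic_intros holo)
  show "cball 0 \<rho> \<subseteq> ball 0 r" using \<open>\<rho> < r\<close> by auto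
  show "\<not> (\<lambda>p. f p + - z) constant_on ball 0 r"
  proof
    assume "(\<lambda>p. f p + - z) constant_on ball 0 r"
    then obtain c where c: "\<And>p. p \<in> ball 0 r \<Longrightarrow> f p + - z = c" unfolding constant_on_def by blast
    have "0 \<in> ball (0::complex) r" "f 0 = 0" using zeros by blast+
    then have "0 < r" by simp
    then have "f (of_real (r / 2)) = f 0" using c[of 0] c[of "of_real (r / 2)"] by (simp add: algebra_simps)
    then have "of_real (r / 2) \<in> {w \<in> ball 0 r. f w = 0}" using \<open>f 0 = 0\<close> \<open>0 < r\<close> by simp
    then have "of_real (r / 2) = (0::complex)" using zeros by blast
    then show False using \<open>0 < r\<close> by simp
  qed
qed (auto simp: convex_connected)

lemma sum_zorder_preimage_subball:
  fixes f :: "complex \<Rightarrow> complex"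
  assumes holo: "f holomorphic_on ball 0 r"
    and zeros: "{w \<in> ball 0 r. f w = 0} = {0}"
    and simple: "deriv f 0 \<noteq> 0"
    and radii: "0 \<le> \<rho>0" "\<rho>0 < \<rho>" "\<rho> < r"
    and large: "\<And>w. \<rho>0 < cmod w \<Longrightarrow> cmod w < r \<Longrightarrow> c < cmod (f w)"
    and z: "cmod z < c"
  shows "(\<Sum>p\<in>{p \<in> ball 0 \<rho>. f p = z}. zorder (\<lambda>p. f p + - z) p) = 1"
proof -
  define s where "s = ball (0::complex) ((\<rho> + r) / 2)"
  define \<gamma> where "\<gamma> = circlepath (0::complex) \<rho>"
  have \<rho>_pos: "0 < \<rho>" using radii by simp
  have s_sub: "s \<subseteq> ball 0 r" using radii by (auto simp: s_def)
  have fin: "finite {p \<in> s. f p + - z = 0}"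
    by (rule finite_subset[OF _ finite_preimage_cball[OF holo zeros, of "(\<rho> + r) / 2" z]])
       (use radii in \<open>auto simp: s_def\<close>)
  have zeros_s: "{p \<in> s. f p = 0} = {0}"
    using zeros s_sub radii by (auto simp: s_def)
  have on_circle: "cmod (- z) < cmod (f p)" if "p \<in> path_image \<gamma>" for p
    using large[of p] that radii z \<rho>_pos by (simp add: \<gamma>_def)
  have outside: "winding_number \<gamma> p = 0" if "\<rho> < cmod p" for p
    unfolding \<gamma>_def by (rule winding_number_zero_outside[of _ "cball 0 \<rho>"]) (use that \<rho>_pos in auto)
  have "(\<Sum>p\<in>{p \<in> s. f p + - z = 0}. winding_number \<gamma> p * zorder (\<lambda>p. f p + - z) p)
      = (\<Sum>p\<in>{p \<in> s. f p = 0}. winding_number \<gamma> p * zorder f p)"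
  proof (rule Rouche_theorem[where g="\<lambda>_. - z"])
    show "f holomorphic_on s" by (rule holomorphic_on_subset[OF holo s_sub])
    show "path_image \<gamma> \<subseteq> s" using \<rho>_pos radii by (auto simp: s_def \<gamma>_def)
    show "\<forall>p. p \<notin> s \<longrightarrow> winding_number \<gamma> p = 0"
      using outside radii by (auto simp: s_def)
  qed (use fin zeros_s on_circle in \<open>auto simp: s_def \<gamma>_def convex_connected\<close>)
  also have "\<dots> = 1"
  proof -
    have "0 \<in> ball (0::complex) r" using radii by simp
    moreover have "f 0 = 0" using zeros by blast
    ultimately have "zorder f 0 = 1" using zorder_zero_eqI[OF holo open_ball, of 0 1] simple by simp
    then show ?thesis using winding_number_circlepath_centre[OF \<rho>_pos] by (simp add: zeros_s \<gamma>_def)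
  qed
  finally have sum_1: "(\<Sum>p\<in>{p \<in> s. f p + - z = 0}. winding_number \<gamma> p * zorder (\<lambda>p. f p + - z) p) = 1" .
  have restrict: "(\<Sum>p\<in>{p \<in> s. f p + - z = 0}. winding_number \<gamma> p * zorder (\<lambda>p. f p + - z) p)
      = (\<Sum>p\<in>{p \<in> ball 0 \<rho>. f p = z}. of_int (zorder (\<lambda>p. f p + - z) p))"
  proof (rule sum.mono_neutral_cong_right[OF fin])
    show "{p \<in> ball 0 \<rho>. f p = z} \<subseteq> {p \<in> s. f p + - z = 0}"
      using radii by (auto simp: s_def)
    show "\<forall>p\<in>{p \<in> s. f p + - z = 0} - {p \<in> ball 0 \<rho>. f p = z}.
        winding_number \<gamma> p * zorder (\<lambda>p. f p + - z) p = 0"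
    proof
      fix p assume p: "p \<in> {p \<in> s. f p + - z = 0} - {p \<in> ball 0 \<rho>. f p = z}"
      then have "f p + - z = 0" "p \<notin> {p \<in> ball 0 \<rho>. f p = z}" by blast+
      then have fp: "f p = z" and "\<rho> \<le> cmod p" by (simp_all add: add_eq_0_iff)
      moreover have "cmod p \<noteq> \<rho>"
        using on_circle[of p] fp \<rho>_pos by (auto simp: \<gamma>_def)
      ultimately show "winding_number \<gamma> p * zorder (\<lambda>p. f p + - z) p = 0" using outside by simp
    qed
    show "winding_number \<gamma> p * zorder (\<lambda>p. f p + - z) p = of_int (zorder (\<lambda>p. f p + - z) p)"
      if "p \<in> {p \<in> ball 0 \<rho>. f p = z}" for p
    proof -
      have "winding_number \<gamma> p = 1"
        unfolding \<gamma>_def using that by (intro winding_number_circlepath) simp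
      then show ?thesis by simp
    qed
  qed
  have "of_int (\<Sum>p\<in>{p \<in> ball 0 \<rho>. f p = z}. zorder (\<lambda>p. f p + - z) p) = (1::complex)"
    unfolding of_int_sum using trans[OF restrict[symmetric] sum_1] .
  then show ?thesis by (simp only: of_int_eq_1_iff)
qed

lemma holomorphic_unique_preimage_subball:
  fixes f :: "complex \<Rightarrow> complex"
  assumes holo: "f holomorphic_on ball 0 r"
    and zeros: "{w \<in> ball 0 r. f w = 0} = {0}"
    and simple: "deriv f 0 \<noteq> 0"
    and radii: "0 \<le> \<rho>0" "\<rho>0 < \<rho>" "\<rho> < r"
    and large: "\<And>w. \<rho>0 < cmod w \<Longrightarrow> cmod w < r \<Longrightarrow> c < cmod (f w)"
    and z: "cmod z < c"
  shows "\<exists>!p. p \<in> ball 0 \<rho> \<and> f p = z"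
proof -
  define S where "S = ball (0::complex) ((\<rho> + r) / 2)"
  have fin: "finite {p \<in> S. f p + - z = 0}"
    by (rule finite_subset[OF _ finite_preimage_cball[OF holo zeros, of "(\<rho> + r) / 2" z]])
       (use radii in \<open>auto simp: S_def\<close>)
  have "(\<lambda>p. f p + - z) holomorphic_on S"
    using radii by (intro holomorphic_intros holomorphic_on_subset[OF holo]) (auto simp: S_def)
  then have "1 \<le> zorder (\<lambda>p. f p + - z) p" if "p \<in> {p \<in> ball 0 \<rho>. f p = z}" for p
    using that radii by (intro zorder_pos_of_finite_zeros[OF _ _ fin]) (auto simp: S_def)
  moreover have "finite {p \<in> ball 0 \<rho>. f p = z}"
    by (rule finite_subset[OF _ fin]) (use radii in \<open>auto simp: S_def\<close>)
  ultimately have "\<exists>!p. p \<in> {p \<in> ball 0 \<rho>. f p = z}"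
    using ex1_of_sum_eq_1[where n = "zorder (\<lambda>p. f p + - z)"] sum_zorder_preimage_subball[OF assms]
    by blast
  then show ?thesis by simp
qed

lemma holomorphic_unique_preimage_ball:
  fixes f :: "complex \<Rightarrow> complex"
  assumes holo: "f holomorphic_on ball 0 r"
    and zeros: "{w \<in> ball 0 r. f w = 0} = {0}"
    and simple: "deriv f 0 \<noteq> 0"
    and radii: "0 \<le> \<rho>0" "\<rho>0 < r"
    and large: "\<And>w. \<rho>0 < cmod w \<Longrightarrow> cmod w < r \<Longrightarrow> c < cmod (f w)"
    and z: "cmod z < c"
  shows "\<exists>!w. w \<in> ball 0 r \<and> f w = z"
proof -
  have preimage_subball: "\<exists>!p. p \<in> ball 0 \<rho> \<and> f p = z" if "\<rho>0 < \<rho>" "\<rho> < r" for \<rho>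
    using holomorphic_unique_preimage_subball[OF holo zeros simple radii(1) that large z] .
  obtain w where w: "w \<in> ball 0 ((\<rho>0 + r) / 2)" "f w = z"
    using preimage_subball[of "(\<rho>0 + r) / 2"] radii by auto
  have unique_w: "w' = w" if "w' \<in> ball 0 r" "f w' = z" for w'
  proof -
    define \<rho> where "\<rho> = (max \<rho>0 (max (cmod w) (cmod w')) + r) / 2"
    have "\<rho>0 < \<rho>" "\<rho> < r" "w \<in> ball 0 \<rho>" "w' \<in> ball 0 \<rho>"
      using that w radii by (auto simp: \<rho>_def)
    moreover obtain p where "\<And>q. q \<in> ball 0 \<rho> \<and> f q = z \<Longrightarrow> q = p"
      using preimage_subball[OF \<open>\<rho>0 < \<rho>\<close> \<open>\<rho> < r\<close>] by (elim ex1E) blast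
    ultimately show ?thesis using that(2) w(2) by metis
  qed
  show ?thesis
  proof (rule ex1I[of _ w])
    show "w \<in> ball 0 r \<and> f w = z" using w radii by auto
  qed (use unique_w in blast)
qed

lemma holomorphic_inverse_on_ball:
  fixes f :: "complex \<Rightarrow> complex"
  assumes holo: "f holomorphic_on ball 0 r"
    and unique: "\<And>z. cmod z < c \<Longrightarrow> \<exists>!w. w \<in> ball 0 r \<and> f w = z"
  obtains h where "h holomorphic_on ball 0 c"
    and "\<And>z. z \<in> ball 0 c \<Longrightarrow> h z \<in> ball 0 r \<and> f (h z) = z \<and> deriv f (h z) * deriv h z = 1"
proof -
  define S where "S = ball 0 r \<inter> f -` ball 0 c"
  have S_sub: "S \<subseteq> ball 0 r" by (auto simp: S_def)
  have S_open: "open S" unfolding S_def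
    by (rule continuous_open_preimage[OF holomorphic_on_imp_continuous_on[OF holo] open_ball open_ball])
  have S_inj: "inj_on f S"
    using unique by (intro inj_onI) (auto simp: S_def)
  obtain h where h: "h holomorphic_on f ` S"
      "\<And>w. w \<in> S \<Longrightarrow> deriv f w * deriv h (f w) = 1" "\<And>w. w \<in> S \<Longrightarrow> h (f w) = w"
    using holomorphic_has_inverse[OF holomorphic_on_subset[OF holo S_sub] S_open S_inj] by blast
  have image: "f ` S = ball 0 c"
  proof
    show "f ` S \<subseteq> ball 0 c" by (auto simp: S_def)
    show "ball 0 c \<subseteq> f ` S"
    proof
      fix z :: complex assume z: "z \<in> ball 0 c"
      then obtain w where "w \<in> ball 0 r" "f w = z" using unique[of z] by auto
      then show "z \<in> f ` S" using z by (auto simp: S_def)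
    qed
  qed
  show ?thesis
  proof (rule that)
    show "h holomorphic_on ball 0 c" using h(1) image by simp
    fix z :: complex assume "z \<in> ball 0 c"
    then have "z \<in> f ` S" using image by simp
    then obtain w where w: "z = f w" "w \<in> S" by (rule imageE)
    then have "h z = w" using h(3) by simp
    then show "h z \<in> ball 0 r \<and> f (h z) = z \<and> deriv f (h z) * deriv h z = 1"
      using w h(2) S_sub by auto
  qed
qed

lemma inverse_difference_quotient:
  fixes f :: "complex \<Rightarrow> complex"
  assumes holo: "f holomorphic_on ball 0 r" and w0: "w0 \<in> ball 0 r" "w0 \<noteq> 0"
    and unique: "\<And>w. w \<in> ball 0 r \<Longrightarrow> f w = f w0 \<Longrightarrow> w = w0" and simple: "deriv f w0 \<noteq> 0"
    and f0: "f 0 = 0" and f'0: "(f has_field_derivative 1) (at 0)"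
  obtains \<psi> where "\<psi> holomorphic_on ball 0 r"
    and "\<And>u. u \<in> ball 0 r \<Longrightarrow> u \<noteq> w0 \<Longrightarrow> \<psi> u = (u - w0) / (f u - f w0)"
    and "\<psi> w0 = 1 / deriv f w0"
    and "\<psi> 0 = w0 / f w0"
    and "deriv \<psi> 0 = (w0 - f w0) / f w0 ^ 2"
proof -
  define Q where "Q u = (if u = w0 then deriv f w0 else (f u - f w0) / (u - w0))" for u
  define \<psi> where "\<psi> u = inverse (Q u)" for u
  have Q_holo: "Q holomorphic_on ball 0 r"
    unfolding Q_def[abs_def] by (rule pole_lemma[OF holo]) (use w0(1) in simp)
  have Q_eq: "Q u * (u - w0) = f u - f w0" if "u \<in> ball 0 r" for u
    by (cases "u = w0") (auto simp: Q_def)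
  have Q_nonzero: "Q u \<noteq> 0" if "u \<in> ball 0 r" for u
    using that simple unique[of u] by (cases "u = w0") (auto simp: Q_def)
  have \<psi>_holo: "\<psi> holomorphic_on ball 0 r"
    unfolding \<psi>_def[abs_def] by (intro holomorphic_intros Q_holo Q_nonzero)
  have \<psi>_eq: "\<psi> u = (u - w0) / (f u - f w0)" if "u \<in> ball 0 r" "u \<noteq> w0" for u
    using that Q_eq[of u] by (simp add: \<psi>_def Q_def)
  have \<psi>_w0: "\<psi> w0 = 1 / deriv f w0" by (simp add: \<psi>_def Q_def inverse_eq_divide)
  have "0 < r" using w0(1) norm_ge_zero[of w0] unfolding mem_ball_0 by linarith
  then have zero: "0 \<in> ball (0::complex) r" by simp
  have Q0: "Q 0 = f w0 / w0" using w0(2) f0 by (simp add: Q_def)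
  have \<psi>_0: "\<psi> 0 = w0 / f w0" using Q0 by (simp add: \<psi>_def)
  have fw0: "f w0 \<noteq> 0" using Q_nonzero[OF zero] Q0 by simp
  have Q_deriv: "(Q has_field_derivative deriv Q 0) (at 0)"
    by (rule holomorphic_derivI[OF Q_holo open_ball zero])
  have "((\<lambda>u. Q u * (u - w0)) has_field_derivative deriv Q 0 * (0 - w0) + 1 * Q 0) (at 0)"
    using DERIV_mult[OF Q_deriv DERIV_diff[OF DERIV_ident DERIV_const]] by simp
  then have "((\<lambda>u. f u - f w0) has_field_derivative deriv Q 0 * (0 - w0) + 1 * Q 0) (at 0)"
    by (rule has_field_derivative_transform_within_open[OF _ open_ball zero]) (simp add: Q_eq)
  moreover have "((\<lambda>u. f u - f w0) has_field_derivative 1 - 0) (at 0)"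
    by (rule DERIV_diff[OF f'0 DERIV_const])
  ultimately have "deriv Q 0 * (0 - w0) + 1 * Q 0 = 1"
    using DERIV_unique by force
  then have dQ0: "deriv Q 0 = (Q 0 - 1) / w0" using w0(2) by (simp add: field_simps)
  have "(\<psi> has_field_derivative - (deriv Q 0 * inverse (Q 0 ^ Suc (Suc 0)))) (at 0)"
    unfolding \<psi>_def[abs_def] by (rule DERIV_inverse_fun[OF Q_deriv Q_nonzero[OF zero]])
  moreover have "- (deriv Q 0 * inverse (Q 0 ^ Suc (Suc 0))) = (w0 - f w0) / f w0 ^ 2"
    unfolding dQ0 Q0 using w0(2) fw0 by (simp add: field_simps power2_eq_square)
  ultimately have "deriv \<psi> 0 = (w0 - f w0) / f w0 ^ 2" by (simp add: DERIV_imp_deriv)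
  with \<psi>_holo \<psi>_eq \<psi>_w0 \<psi>_0 show ?thesis by (rule that)
qed

lemma circlepath_integral_double_pole_at_0:
  fixes \<phi> :: "complex \<Rightarrow> complex"
  assumes holo: "\<phi> holomorphic_on ball 0 r" and "\<rho> < r"
    and w0: "cmod w0 < \<rho>" "w0 \<noteq> 0"
  shows "((\<lambda>u. \<phi> u / (u^2 * (u - w0))) has_contour_integral
           2 * of_real pi * \<i> * ((\<phi> w0 - \<phi> 0) / w0^2 - deriv \<phi> 0 / w0)) (circlepath 0 \<rho>)"
proof -
  have \<rho>: "0 < \<rho>" using w0 by (meson le_less_trans norm_ge_zero)
  have cont: "continuous_on (cball 0 \<rho>) \<phi>"
    by (rule holomorphic_on_imp_continuous_on, rule holomorphic_on_subset[OF holo])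
       (use \<open>\<rho> < r\<close> in auto)
  have holo_\<rho>: "\<phi> holomorphic_on ball 0 \<rho>"
    by (rule holomorphic_on_subset[OF holo]) (use \<open>\<rho> < r\<close> in auto)
  have "((\<lambda>u. (\<phi> u / (u - w0)) / w0^2 - (\<phi> u / (u - 0)) / w0^2 - (\<phi> u / (u - 0) ^ Suc 1) / w0)
      has_contour_integral
        (2 * of_real pi * \<i> * \<phi> w0) / w0^2 - (2 * of_real pi * \<i> * \<phi> 0) / w0^2
        - (complex_of_real (2 * pi) * \<i> / fact 1 * (deriv ^^ 1) \<phi> 0) / w0) (circlepath 0 \<rho>)"
    using w0 \<rho>
    by (intro has_contour_integral_diff has_contour_integral_div Cauchy_integral_circlepath[OF cont holo_\<rho>]
          Cauchy_has_contour_integral_higher_derivative_circlepath[OF cont holo_\<rho>]) auto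
  moreover have "(2 * of_real pi * \<i> * \<phi> w0) / w0^2 - (2 * of_real pi * \<i> * \<phi> 0) / w0^2
        - (complex_of_real (2 * pi) * \<i> / fact 1 * (deriv ^^ 1) \<phi> 0) / w0
      = 2 * of_real pi * \<i> * ((\<phi> w0 - \<phi> 0) / w0^2 - deriv \<phi> 0 / w0)"
    by (simp add: diff_divide_distrib right_diff_distrib)
  ultimately have "((\<lambda>u. (\<phi> u / (u - w0)) / w0^2 - (\<phi> u / (u - 0)) / w0^2 - (\<phi> u / (u - 0) ^ Suc 1) / w0)
      has_contour_integral 2 * of_real pi * \<i> * ((\<phi> w0 - \<phi> 0) / w0^2 - deriv \<phi> 0 / w0)) (circlepath 0 \<rho>)"
    by (simp only:)
  then show ?thesis
  proof (rule has_contour_integral_eq)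
    fix u assume "u \<in> path_image (circlepath 0 \<rho>)"
    then have "u \<noteq> 0" "u \<noteq> w0" using \<rho> w0 by auto
    then show "(\<phi> u / (u - w0)) / w0^2 - (\<phi> u / (u - 0)) / w0^2 - (\<phi> u / (u - 0) ^ Suc 1) / w0
        = \<phi> u / (u^2 * (u - w0))"
      using w0 by (simp add: field_simps power2_eq_square)
  qed
qed

lemma circlepath_integral_laurent_principal_part:
  fixes U :: "complex \<Rightarrow> complex"
  assumes holo: "U holomorphic_on ball 0 r" and \<rho>: "0 < \<rho>" "\<rho> < r"
  shows "((\<lambda>u. 1 / u^3 - a / u + U u) has_contour_integral - 2 * of_real pi * \<i> * a) (circlepath 0 \<rho>)"
proof -
  have "((\<lambda>u. (\<lambda>_. 1) u / (u - 0) ^ Suc 2 - a * ((\<lambda>_. 1) u / (u - 0)) + U u) has_contour_integral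
      complex_of_real (2 * pi) * \<i> / fact 2 * (deriv ^^ 2) (\<lambda>_. 1) 0 - a * (2 * of_real pi * \<i> * 1) + 0)
      (circlepath 0 \<rho>)"
    using \<rho>
    by (intro has_contour_integral_add has_contour_integral_diff has_contour_integral_lmul
          Cauchy_has_contour_integral_higher_derivative_circlepath Cauchy_integral_circlepath
          Cauchy_theorem_disc_simple[OF holo]) auto
  then show ?thesis by (simp add: power3_eq_cube mult.commute)
qed

definition kernel_off_atom :: "complex \<Rightarrow> complex \<Rightarrow> real \<Rightarrow> complex" where
  "kernel_off_atom c z t = (if of_real t = c then 0 else inverse (z - of_real t))"

locale centered_bounded_law = prob_space M for M :: "real measure" +
  fixes R :: real
  assumes sets_M: "sets M = sets borel"
    and bounded: "AE t in M. \<bar>t\<bar> \<le> R"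
    and mean_zero: "(\<integral>t. t \<partial>M) = 0"
    and R_pos: "0 < R"
begin

lemma borel_measurable_M: "f \<in> borel_measurable borel \<Longrightarrow> f \<in> borel_measurable M"
  by (metis measurable_cong_sets sets_M)

lemma borel_measurable_continuous_M: "continuous_on UNIV f \<Longrightarrow> f \<in> borel_measurable M"
  by (intro borel_measurable_M borel_measurable_continuous_onI)

definition moment :: "nat \<Rightarrow> real" where
  "moment n = (\<integral>t. t ^ n \<partial>M)"

lemma moment_0: "moment 0 = 1"
  by (simp add: moment_def prob_space)

lemma moment_1: "moment 1 = 0"
  using mean_zero by (simp add: moment_def)

lemma abs_moment_le: "\<bar>moment n\<bar> \<le> R ^ n"
proof -
  have bound: "AE t in M. norm (t ^ n) \<le> R ^ n"
    using bounded by eventually_elim (simp add: power_abs power_mono)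
  have "integrable M (\<lambda>t. t ^ n)"
    by (rule integrable_const_bound[OF bound]) (intro borel_measurable_continuous_M continuous_intros)
  have "\<bar>moment n\<bar> \<le> (\<integral>t. norm (t ^ n) \<partial>M)"
    unfolding moment_def using integral_norm_bound[of M "\<lambda>t. t ^ n"] by simp
  also have "\<dots> \<le> (\<integral>t. R ^ n \<partial>M)"
    using bound integrable_norm[OF \<open>integrable M (\<lambda>t. t ^ n)\<close>] by (intro integral_mono_AE) auto
  also have "\<dots> = R ^ n" by (simp add: prob_space)
  finally show ?thesis .
qed

definition moment_tail :: "complex \<Rightarrow> complex" where
  "moment_tail w = (\<Sum>n. of_real (moment (n + 3)) * w ^ n)"

definition gfun_factor :: "complex \<Rightarrow> complex" where
  "gfun_factor w = 1 + of_real (moment 2) * w^2 + w^3 * moment_tail w"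

lemma summable_norm_moment_tail:
  assumes "cmod w < 1 / R"
  shows "summable (\<lambda>n. cmod (of_real (moment (n + 3)) * w ^ n))"
proof (rule summable_comparison_test')
  have "cmod w * R < 1" using assms R_pos by (simp add: field_simps)
  then show "summable (\<lambda>n. R^3 * (cmod w * R) ^ n)"
    using R_pos by (intro summable_mult summable_geometric) simp
  fix n :: nat
  have "cmod (of_real (moment (n + 3)) * w ^ n) = \<bar>moment (n + 3)\<bar> * cmod w ^ n"
    by (simp add: norm_mult norm_power)
  also have "\<dots> \<le> R^(n + 3) * cmod w ^ n"
    using abs_moment_le by (intro mult_right_mono) auto
  also have "\<dots> = R^3 * (cmod w * R) ^ n"
    by (simp add: power_add power_mult_distrib)
  finally show "norm (cmod (of_real (moment (n + 3)) * w ^ n)) \<le> R^3 * (cmod w * R) ^ n"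
    by simp
qed

lemma moment_tail_holomorphic: "moment_tail holomorphic_on ball 0 (1 / R)"
proof -
  have radius: "ereal (1 / R) \<le> conv_radius (\<lambda>n. of_real (moment (n + 3)) :: complex)"
  proof (rule conv_radius_geI_ex')
    fix r :: real assume "0 < r" "ereal r < ereal (1 / R)"
    then show "summable (\<lambda>n. of_real (moment (n + 3)) * (of_real r :: complex) ^ n)"
      by (intro summable_norm_cancel[OF summable_norm_moment_tail]) simp
  qed
  have "(moment_tail has_field_derivative
      (\<Sum>n. diffs (\<lambda>n. of_real (moment (n + 3))) n * w ^ n)) (at w within A)"
    if "cmod w < 1 / R" for w A
    unfolding moment_tail_def[abs_def]
  proof (rule has_field_derivative_powser)
    have "ereal (cmod w) < ereal (1 / R)" using that by simp
    also have "\<dots> \<le> conv_radius (\<lambda>n. of_real (moment (n + 3)) :: complex)" by (rule radius)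
    finally show "ereal (cmod w) < conv_radius (\<lambda>n. of_real (moment (n + 3)) :: complex)" .
  qed
  then show ?thesis
    unfolding holomorphic_on_def field_differentiable_def using mem_ball_0 by blast
qed

lemma gfun_factor_holomorphic: "gfun_factor holomorphic_on ball 0 (1 / R)"
  unfolding gfun_factor_def[abs_def] by (intro holomorphic_intros moment_tail_holomorphic)

lemma moment_series_sums_gfun:
  assumes w: "cmod w < 1 / R" "w \<noteq> 0"
  shows "(\<lambda>n. of_real (moment n) * w ^ n) sums (gfun M w / w)"
proof -
  define f where "f n t = (w * of_real t) ^ n" for n t
  have wR: "cmod w * R < 1" using w R_pos by (simp add: field_simps)
  have f_bound: "AE t in M. norm (f n t) \<le> (cmod w * R) ^ n" for n
    using bounded
  proof eventually_elim
    case (elim t)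
    then show ?case
      unfolding f_def by (simp add: norm_mult norm_power power_mono mult_left_mono)
  qed
  have f_int: "integrable M (f n)" for n
    by (rule integrable_const_bound[OF f_bound]) (unfold f_def, intro borel_measurable_continuous_M continuous_intros)
  have small: "AE t in M. cmod (w * of_real t) < 1"
    using bounded
  proof eventually_elim
    case (elim t)
    have "cmod (w * of_real t) \<le> cmod w * R" using elim by (simp add: norm_mult mult_left_mono)
    then show ?case using wR by simp
  qed
  have summable_f: "AE t in M. summable (\<lambda>n. norm (f n t))"
    using small by eventually_elim (simp add: f_def norm_power summable_geometric)
  have summable_int: "summable (\<lambda>n. \<integral>t. norm (f n t) \<partial>M)"
  proof (rule summable_comparison_test')
    show "summable (\<lambda>n. (cmod w * R) ^ n)"
      using wR R_pos by (intro summable_geometric) simp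
    fix n
    have "(\<integral>t. norm (f n t) \<partial>M) \<le> (\<integral>t. (cmod w * R) ^ n \<partial>M)"
      using f_bound[of n] integrable_norm[OF f_int[of n]] by (intro integral_mono_AE) auto
    then show "norm (\<integral>t. norm (f n t) \<partial>M) \<le> (cmod w * R) ^ n"
      by (simp add: prob_space)
  qed
  have "(\<lambda>n. integral\<^sup>L M (f n)) sums (\<integral>t. (\<Sum>n. f n t) \<partial>M)"
    by (rule sums_integral[OF f_int summable_f summable_int])
  moreover have "integral\<^sup>L M (f n) = of_real (moment n) * w ^ n" for n
  proof -
    have "integral\<^sup>L M (f n) = (\<integral>t. w ^ n * of_real (t ^ n) \<partial>M)"
      unfolding f_def by (simp add: power_mult_distrib)
    also have "\<dots> = w ^ n * of_real (moment n)"
      unfolding moment_def integral_mult_right_zero by (subst integral_complex_of_real) (rule refl)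
    finally show ?thesis by simp
  qed
  moreover have "(\<integral>t. (\<Sum>n. f n t) \<partial>M) = gfun M w / w"
  proof -
    have "AE t in M. inverse (1 / w - of_real t) = w * (\<Sum>n. f n t)"
      using small
    proof eventually_elim
      case (elim t)
      then have "(\<Sum>n. f n t) = 1 / (1 - w * of_real t)"
        unfolding f_def by (rule suminf_geometric)
      moreover have "1 - w * of_real t \<noteq> 0" using elim by auto
      moreover have "1 / w - of_real t = (1 - w * of_real t) / w" using w(2) by (simp add: field_simps)
      ultimately show ?case by (simp only: inverse_divide) simp
    qed
    moreover have "(\<lambda>t. w * (\<Sum>n. f n t)) \<in> borel_measurable M"
      using borel_measurable_integrable[OF integrable_suminf[OF f_int summable_f summable_int]]
      by measurable
    moreover have "(\<lambda>t. inverse (1 / w - of_real t)) \<in> borel_measurable M"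
      by (intro borel_measurable_M) measurable
    ultimately have "(\<integral>t. inverse (1 / w - of_real t) \<partial>M) = (\<integral>t. w * (\<Sum>n. f n t) \<partial>M)"
      by (intro integral_cong_AE)
    then have "gfun M w = (\<integral>t. w * (\<Sum>n. f n t) \<partial>M)"
      using w(2) by (simp add: gfun_def cauchy_transform_def)
    then show ?thesis using w(2) by simp
  qed
  ultimately show ?thesis by simp
qed

lemma gfun_eq_factor:
  assumes w: "cmod w < 1 / R"
  shows "gfun M w = w * gfun_factor w"
proof (cases "w = 0")
  case True
  then show ?thesis by (simp add: gfun_def)
next
  case False
  have "(\<Sum>n<3. of_real (moment n) * w ^ n) = 1 + of_real (moment 2) * w ^ 2"
    using moment_0 moment_1 by (simp add: numeral_3_eq_3 numeral_2_eq_2 power2_eq_square)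
  then have "(\<lambda>n. of_real (moment (n + 3)) * w ^ (n + 3))
      sums (gfun M w / w - (1 + of_real (moment 2) * w ^ 2))"
    using sums_split_initial_segment[OF moment_series_sums_gfun[OF w False], of 3] by simp
  moreover have "(\<lambda>n. of_real (moment (n + 3)) * w ^ (n + 3)) sums (w ^ 3 * moment_tail w)"
    using sums_mult[OF summable_sums[OF summable_norm_cancel[OF summable_norm_moment_tail[OF w]]], of "w ^ 3"]
    by (simp add: moment_tail_def power_add mult_ac)
  ultimately have "gfun M w / w - (1 + of_real (moment 2) * w ^ 2) = w ^ 3 * moment_tail w"
    by (rule sums_unique2)
  then have "gfun M w / w = gfun_factor w"
    unfolding gfun_factor_def by (simp add: algebra_simps)
  then show ?thesis using False by (simp add: field_simps)
qed

lemma cauchy_transform_split_atom: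
  assumes z: "R < cmod z"
  shows "integrable M (kernel_off_atom c z)"
    and "cauchy_transform M z = integral\<^sup>L M (kernel_off_atom c z) + measure M {t. of_real t = c} *\<^sub>R inverse (z - c)"
proof -
  have atom: "{t. of_real t = c} \<in> sets M"
    unfolding sets_M by (cases "Im c = 0") (auto simp: complex_eq_iff)
  have "AE t in M. norm (kernel_off_atom c z t) \<le> 1 / (cmod z - R)"
    using bounded
  proof eventually_elim
    case (elim t)
    have "cmod z \<le> cmod (z - of_real t) + \<bar>t\<bar>"
      using norm_triangle_ineq4[of "z - of_real t" "- of_real t"] by simp
    then have "inverse (cmod (z - of_real t)) \<le> inverse (cmod z - R)"
      using elim z by (intro le_imp_inverse_le) auto
    then show ?case using z by (simp add: kernel_off_atom_def norm_divide inverse_eq_divide)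
  qed
  moreover have "kernel_off_atom c z \<in> borel_measurable M"
    unfolding kernel_off_atom_def using atom by (intro measurable_If_set borel_measurable_M) (auto, measurable)
  ultimately show int: "integrable M (kernel_off_atom c z)"
    by (rule integrable_const_bound)
  have "(\<lambda>t. kernel_off_atom c z t + indicator {t. of_real t = c} t *\<^sub>R inverse (z - c)) = (\<lambda>t. inverse (z - of_real t))"
    by (auto simp: kernel_off_atom_def indicator_def)
  moreover have "has_bochner_integral M (\<lambda>t. kernel_off_atom c z t + indicator {t. of_real t = c} t *\<^sub>R inverse (z - c))
      (integral\<^sup>L M (kernel_off_atom c z) + measure M {t. of_real t = c} *\<^sub>R inverse (z - c))"
    using atom by (intro has_bochner_integral_add has_bochner_integral_integrable int
        has_bochner_integral_indicator) (auto simp: less_top[symmetric])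
  ultimately show "cauchy_transform M z = integral\<^sup>L M (kernel_off_atom c z) + measure M {t. of_real t = c} *\<^sub>R inverse (z - c)"
    unfolding cauchy_transform_def by (metis has_bochner_integral_integral_eq)
qed

end

locale cauchy_bounded_below_law = centered_bounded_law +
  fixes m :: real
  assumes m_pos: "0 < m"
    and cauchy_transform_ge: "\<And>z. cmod z = R \<Longrightarrow> m \<le> cmod (cauchy_transform M z)"
    and gfun_zeros: "{w. cmod w < 1 / R \<and> gfun M w = 0} = {0}"
begin

lemma integrable_cauchy_kernel_circle:
  assumes "cmod c = R"
  shows "integrable M (\<lambda>t. inverse (c - of_real t))"
proof (rule ccontr)
  assume "\<not> ?thesis"
  then have "cauchy_transform M c = 0"
    unfolding cauchy_transform_def by (rule not_integrable_integral_eq)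
  with cauchy_transform_ge[OF assms] m_pos show False by simp
qed

lemma tendsto_integral_kernel_off_atom:
  assumes lim: "z \<longlonglongrightarrow> c" and c: "cmod c = R" and outside: "\<And>n. R < cmod (z n)"
  shows "(\<lambda>n. integral\<^sup>L M (kernel_off_atom c (z n))) \<longlonglongrightarrow> cauchy_transform M c"
proof -
  obtain N where N: "\<And>n t. N \<le> n \<Longrightarrow> \<bar>t\<bar> \<le> R \<Longrightarrow> cmod (c - of_real t) / 2 \<le> cmod (z n - of_real t)"
    using eventually_half_dist_real_interval[OF lim c R_pos outside]
    unfolding eventually_sequentially by blast
  have "(\<lambda>n. integral\<^sup>L M (kernel_off_atom c (z (n + N)))) \<longlonglongrightarrow> cauchy_transform M c"
    unfolding cauchy_transform_def
  proof (rule integral_dominated_convergence[where w="\<lambda>t. 2 * norm (inverse (c - of_real t))"])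
    show "(\<lambda>t. inverse (c - of_real t)) \<in> borel_measurable M"
      by (intro borel_measurable_M) measurable
    show "kernel_off_atom c (z (n + N)) \<in> borel_measurable M" for n
      using cauchy_transform_split_atom(1)[OF outside] by (rule borel_measurable_integrable)
    show "integrable M (\<lambda>t. 2 * norm (inverse (c - of_real t)))"
      by (intro integrable_mult_right integrable_norm integrable_cauchy_kernel_circle c)
    show "AE t in M. (\<lambda>n. kernel_off_atom c (z (n + N)) t) \<longlonglongrightarrow> inverse (c - of_real t)"
    proof (rule AE_I2)
      fix t
      have "(\<lambda>n. inverse (z (n + N) - of_real t)) \<longlonglongrightarrow> inverse (c - of_real t)"
        if "of_real t \<noteq> c"
        using that by (intro tendsto_inverse tendsto_diff tendsto_const LIMSEQ_ignore_initial_segment lim) simp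
      then show "(\<lambda>n. kernel_off_atom c (z (n + N)) t) \<longlonglongrightarrow> inverse (c - of_real t)"
        by (cases "of_real t = c") (auto simp: kernel_off_atom_def)
    qed
    show "AE t in M. norm (kernel_off_atom c (z (n + N)) t) \<le> 2 * norm (inverse (c - of_real t))" for n
      using bounded
    proof eventually_elim
      case (elim t)
      show ?case
      proof (cases "of_real t = c")
        case False
        have "norm (kernel_off_atom c (z (n + N)) t) = inverse (cmod (z (n + N) - of_real t))"
          using False by (simp add: kernel_off_atom_def norm_inverse)
        also have "\<dots> \<le> inverse (cmod (c - of_real t) / 2)"
          using N[of "n + N" t] elim False by (intro le_imp_inverse_le) auto
        also have "\<dots> = 2 * norm (inverse (c - of_real t))"
          by (simp add: norm_inverse inverse_eq_divide norm_divide)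
        finally show ?thesis .
      qed (simp add: kernel_off_atom_def)
    qed
  qed
  then show ?thesis by (rule LIMSEQ_offset)
qed

lemma eventually_cauchy_transform_gt:
  assumes lim: "z \<longlonglongrightarrow> c" and c: "cmod c = R" and outside: "\<And>n. R < cmod (z n)" and "0 < e"
  shows "\<forall>\<^sub>F n in sequentially. m - e < cmod (cauchy_transform M (z n))"
proof -
  define p where "p = measure M {t. of_real t = c}"
  define I where "I n = integral\<^sup>L M (kernel_off_atom c (z n))" for n
  have split: "cauchy_transform M (z n) = I n + p *\<^sub>R inverse (z n - c)" for n
    unfolding I_def p_def by (rule cauchy_transform_split_atom(2)[OF outside])
  have lim_I: "I \<longlonglongrightarrow> cauchy_transform M c"
    unfolding I_def by (rule tendsto_integral_kernel_off_atom[OF lim c outside])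
  show ?thesis
  proof (cases "p = 0")
    case True
    then have "(\<lambda>n. cmod (cauchy_transform M (z n))) \<longlonglongrightarrow> cmod (cauchy_transform M c)"
      using lim_I by (simp add: split tendsto_norm)
    moreover have "m - e < cmod (cauchy_transform M c)"
      using cauchy_transform_ge[OF c] \<open>0 < e\<close> by simp
    ultimately show ?thesis by (rule order_tendstoD)
  next
    case False
    \<comment> \<open>an atom at \<open>c\<close> makes the transform blow up near \<open>c\<close>\<close>
    then have p: "0 < p" using measure_nonneg[of M] unfolding p_def by (metis less_eq_real_def)
    define C where "C = cmod (cauchy_transform M c) + 1"
    have C: "0 < C" unfolding C_def by (simp add: add_nonneg_pos)
    have "\<forall>\<^sub>F n in sequentially. cmod (I n) < C"
      unfolding C_def by (rule order_tendstoD(2)[OF tendsto_norm[OF lim_I]]) simp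
    moreover have "\<forall>\<^sub>F n in sequentially. dist (z n) c < p / (C + m)"
      using lim p C m_pos by (intro tendstoD) auto
    ultimately show ?thesis
    proof eventually_elim
      case (elim n)
      have "0 < cmod (z n - c)" using outside[of n] c by auto
      then have "C + m < p / cmod (z n - c)"
        using elim(2) C m_pos by (simp add: dist_norm field_simps)
      also have "\<dots> = cmod (p *\<^sub>R inverse (z n - c))"
        using p by (simp add: norm_inverse divide_inverse)
      also have "\<dots> \<le> cmod (cauchy_transform M (z n)) + cmod (I n)"
        unfolding split using norm_triangle_ineq4[of "I n + p *\<^sub>R inverse (z n - c)" "I n"]
        by (simp add: add.commute)
      finally show ?case using elim(1) m_pos \<open>0 < e\<close> by simp
    qed
  qed
qed

lemma cauchy_transform_gt_near_circle:
  assumes "0 < e"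
  obtains \<delta> where "0 < \<delta>" "\<And>z. R < cmod z \<Longrightarrow> cmod z < R + \<delta> \<Longrightarrow> m - e < cmod (cauchy_transform M z)"
proof -
  have "\<exists>\<delta>>0. \<forall>z. R < cmod z \<and> cmod z < R + \<delta> \<longrightarrow> m - e < cmod (cauchy_transform M z)"
  proof (rule ccontr)
    assume contra: "\<not> ?thesis"
    have "\<exists>z. R < cmod z \<and> cmod z < R + inverse (real (Suc n)) \<and> \<not> m - e < cmod (cauchy_transform M z)"
      for n
    proof -
      have "0 < inverse (real (Suc n))" by simp
      then show ?thesis using contra by blast
    qed
    then obtain z where z: "\<And>n. R < cmod (z n)" "\<And>n. cmod (z n) < R + inverse (real (Suc n))"
        "\<And>n. \<not> m - e < cmod (cauchy_transform M (z n))"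
      by metis
    have "z n \<in> cball 0 (R + 1)" for n
    proof -
      have "inverse (real (Suc n)) \<le> 1" by (simp add: inverse_le_1_iff)
      then show ?thesis using z(2)[of n] by simp
    qed
    then obtain c r where r: "strict_mono r" and lim: "(z \<circ> r) \<longlonglongrightarrow> c"
      using compact_imp_seq_compact[OF compact_cball, unfolded seq_compact_def, rule_format, of z 0 "R + 1"]
      by blast
    have lim_norm: "(\<lambda>n. cmod ((z \<circ> r) n)) \<longlonglongrightarrow> cmod c" by (rule tendsto_norm[OF lim])
    have "(\<lambda>n. R + inverse (real (Suc (r n)))) \<longlonglongrightarrow> R + 0"
      using LIMSEQ_subseq_LIMSEQ[OF LIMSEQ_inverse_real_of_nat r]
      by (intro tendsto_add tendsto_const) (simp add: o_def)
    then have "cmod c \<le> R + 0"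
      by (rule LIMSEQ_le[OF lim_norm]) (use z(2) less_imp_le in auto)
    moreover have "R \<le> cmod c"
      by (rule LIMSEQ_le_const[OF lim_norm]) (use z(1) less_imp_le in auto)
    ultimately have c: "cmod c = R" by simp
    have "\<forall>\<^sub>F n in sequentially. m - e < cmod (cauchy_transform M ((z \<circ> r) n))"
      by (rule eventually_cauchy_transform_gt[OF lim c _ assms]) (use z(1) in simp)
    then obtain n where "m - e < cmod (cauchy_transform M ((z \<circ> r) n))"
      using eventually_sequentially by auto
    then show False using z(3) by simp
  qed
  then show ?thesis using that by blast
qed

lemma gfun_gt_annulus:
  obtains \<rho>0 where "10 / (11 * R) \<le> \<rho>0" "\<rho>0 < 1 / R"
    and "\<And>w. \<rho>0 < cmod w \<Longrightarrow> cmod w < 1 / R \<Longrightarrow> 9 * m / 10 < cmod (gfun M w)"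
proof -
  obtain \<delta> where \<delta>: "0 < \<delta>"
    and near: "\<And>z. R < cmod z \<Longrightarrow> cmod z < R + \<delta> \<Longrightarrow> m - m / 10 < cmod (cauchy_transform M z)"
    using cauchy_transform_gt_near_circle[of "m / 10"] m_pos by auto
  define \<rho>0 where "\<rho>0 = max (1 / (R + \<delta>)) (10 / (11 * R))"
  have "1 / (R + \<delta>) < 1 / R" using \<delta> R_pos by (simp add: frac_less2)
  moreover have "10 / (11 * R) < 1 / R" using R_pos by (simp add: field_simps)
  ultimately have "\<rho>0 < 1 / R" by (simp add: \<rho>0_def)
  moreover have "9 * m / 10 < cmod (gfun M w)" if w: "\<rho>0 < cmod w" "cmod w < 1 / R" for w
  proof -
    have "1 / (R + \<delta>) < cmod w" using w(1) by (simp add: \<rho>0_def)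
    moreover have w_pos: "0 < cmod w"
    proof -
      have "0 < 10 / (11 * R)" using R_pos by simp
      also have "\<dots> < cmod w" using w(1) by (simp add: \<rho>0_def)
      finally show ?thesis .
    qed
    ultimately have "R < cmod (1 / w)" "cmod (1 / w) < R + \<delta>"
      using w(2) \<delta> R_pos by (simp_all add: norm_divide field_simps)
    then show ?thesis using near w_pos by (simp add: gfun_def)
  qed
  ultimately show ?thesis using that[of \<rho>0] by (simp add: \<rho>0_def)
qed

lemma gfun_holomorphic: "gfun M holomorphic_on ball 0 (1 / R)"
  by (rule holomorphic_transform[of "\<lambda>w. w * gfun_factor w"])
     (auto intro!: holomorphic_intros gfun_factor_holomorphic simp: gfun_eq_factor)

lemma gfun_has_field_derivative_0: "(gfun M has_field_derivative 1) (at 0)"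
proof -
  have zero: "0 \<in> ball (0::complex) (1 / R)" using R_pos by simp
  have "(gfun_factor has_field_derivative deriv gfun_factor 0) (at 0)"
    by (rule holomorphic_derivI[OF gfun_factor_holomorphic open_ball zero])
  from DERIV_mult[OF DERIV_ident this]
  have "((\<lambda>w. w * gfun_factor w) has_field_derivative 1) (at 0)"
    by (simp add: gfun_factor_def)
  then show ?thesis
    by (rule has_field_derivative_transform_within_open[OF _ open_ball zero]) (simp add: gfun_eq_factor)
qed

lemma gfun_unique_preimage:
  assumes "cmod z < 9 * m / 10"
  shows "\<exists>!w. w \<in> ball 0 (1 / R) \<and> gfun M w = z"
proof -
  obtain \<rho>0 where \<rho>0: "10 / (11 * R) \<le> \<rho>0" "\<rho>0 < 1 / R"
    and large: "\<And>w. \<rho>0 < cmod w \<Longrightarrow> cmod w < 1 / R \<Longrightarrow> 9 * m / 10 < cmod (gfun M w)"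
    using gfun_gt_annulus by blast
  have "0 \<le> \<rho>0" using \<rho>0(1) R_pos by (smt (verit) divide_pos_pos)
  moreover have "{w \<in> ball 0 (1 / R). gfun M w = 0} = {0}" using gfun_zeros by auto
  moreover have "deriv (gfun M) 0 \<noteq> 0" using DERIV_imp_deriv[OF gfun_has_field_derivative_0] by simp
  ultimately show ?thesis
    using holomorphic_unique_preimage_ball[OF gfun_holomorphic _ _ _ \<rho>0(2) large assms] by blast
qed

lemma Kfun_local_inverse:
  obtains h where "h holomorphic_on ball 0 (9 * m / 10)"
    and "\<And>z. z \<in> ball 0 (9 * m / 10) \<Longrightarrow>
      h z \<in> ball 0 (1 / R) \<and> gfun M (h z) = z \<and> deriv (gfun M) (h z) * deriv h z = 1 \<and> Kfun M R z = 1 / h z"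
proof -
  obtain h where h: "h holomorphic_on ball 0 (9 * m / 10)"
    "\<And>z. z \<in> ball 0 (9 * m / 10) \<Longrightarrow>
      h z \<in> ball 0 (1 / R) \<and> gfun M (h z) = z \<and> deriv (gfun M) (h z) * deriv h z = 1"
    using holomorphic_inverse_on_ball[OF gfun_holomorphic gfun_unique_preimage] by blast
  have "Kfun M R z = 1 / h z" if "z \<in> ball 0 (9 * m / 10)" for z
  proof -
    have "(THE w. cmod w < 1 / R \<and> gfun M w = z) = h z"
      using h(2)[OF that] gfun_unique_preimage[of z] that by (intro the1_equality) auto
    then show ?thesis by (simp add: Kfun_def)
  qed
  with h show ?thesis using that by blast
qed

lemma Kfun_has_field_derivative:
  assumes z0: "0 < cmod z0" "cmod z0 < 9 * m / 10"
  obtains w0 where "cmod w0 < 1 / R" "gfun M w0 = z0" "w0 \<noteq> 0" "deriv (gfun M) w0 \<noteq> 0"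
    and "(Kfun M R has_field_derivative - 1 / (deriv (gfun M) w0 * w0^2)) (at z0)"
proof -
  obtain h where h_holo: "h holomorphic_on ball 0 (9 * m / 10)"
    and h: "\<And>z. z \<in> ball 0 (9 * m / 10) \<Longrightarrow>
      h z \<in> ball 0 (1 / R) \<and> gfun M (h z) = z \<and> deriv (gfun M) (h z) * deriv h z = 1 \<and> Kfun M R z = 1 / h z"
    using Kfun_local_inverse by blast
  have z0_in: "z0 \<in> ball 0 (9 * m / 10)" using z0 by simp
  define w0 where "w0 = h z0"
  have w0: "cmod w0 < 1 / R" "gfun M w0 = z0" "deriv (gfun M) w0 * deriv h z0 = 1"
    using h[OF z0_in] by (auto simp: w0_def)
  have "w0 \<noteq> 0" using w0(2) z0(1) by (auto simp: gfun_def)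
  have "((\<lambda>z. inverse (h z)) has_field_derivative - (deriv h z0 * inverse (h z0 ^ Suc (Suc 0)))) (at z0)"
    by (rule DERIV_inverse_fun[OF holomorphic_derivI[OF h_holo open_ball z0_in]])
       (use \<open>w0 \<noteq> 0\<close> in \<open>simp add: w0_def\<close>)
  then have "(Kfun M R has_field_derivative - (deriv h z0 * inverse (h z0 ^ Suc (Suc 0)))) (at z0)"
    by (rule has_field_derivative_transform_within_open[OF _ open_ball z0_in])
       (simp add: h inverse_eq_divide)
  moreover have gd: "deriv (gfun M) w0 \<noteq> 0" using w0(3) by auto
  moreover have "deriv h z0 = 1 / deriv (gfun M) w0" using w0(3) gd by (simp add: field_simps)
  then have "- (deriv h z0 * inverse (h z0 ^ Suc (Suc 0))) = - 1 / (deriv (gfun M) w0 * w0^2)"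
    by (simp add: w0_def[symmetric] power2_eq_square divide_inverse mult_ac)
  ultimately show ?thesis using that w0 \<open>w0 \<noteq> 0\<close> by simp
qed

lemma gfun_factor_nonzero:
  assumes "w \<in> ball 0 (1 / R)"
  shows "gfun_factor w \<noteq> 0"
proof (cases "w = 0")
  case False
  then have "gfun M w \<noteq> 0" using gfun_zeros assms by auto
  then show ?thesis using gfun_eq_factor assms by auto
qed (simp add: gfun_factor_def)

definition gfun_remainder :: "complex \<Rightarrow> complex" where
  "gfun_remainder u = (of_real (moment 2) ^ 2 * u - moment_tail u + of_real (moment 2) * u^2 * moment_tail u)
     / gfun_factor u"

lemma gfun_remainder_holomorphic: "gfun_remainder holomorphic_on ball 0 (1 / R)"
  unfolding gfun_remainder_def[abs_def]
  by (intro holomorphic_intros moment_tail_holomorphic gfun_factor_holomorphic gfun_factor_nonzero)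

lemma inverse_gfun_laurent:
  assumes u: "u \<in> ball 0 (1 / R)" "u \<noteq> 0"
  shows "1 / (u^2 * gfun M u) = 1 / u^3 - of_real (moment 2) / u + gfun_remainder u"
proof -
  define a :: complex where "a = of_real (moment 2)"
  define P where "P = gfun_factor u"
  define T where "T = moment_tail u"
  have "P \<noteq> 0" using gfun_factor_nonzero[OF u(1)] by (simp add: P_def)
  moreover have "gfun M u = u * P" using gfun_eq_factor u(1) by (simp add: P_def)
  moreover have "P = 1 + a * u^2 + u^3 * T" by (simp add: P_def T_def a_def gfun_factor_def)
  ultimately show ?thesis
    using u(2) unfolding gfun_remainder_def a_def[symmetric] P_def[symmetric] T_def[symmetric]
    by (simp add: field_simps power2_eq_square power3_eq_cube)
qed

lemma Kfun_deriv_error_contour_integral: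
  assumes z0: "cmod z0 < 9 * m / 10"
    and w0: "cmod w0 < \<rho>" "w0 \<noteq> 0" "gfun M w0 = z0" "deriv (gfun M) w0 \<noteq> 0"
    and \<rho>: "\<rho> < 1 / R"
    and circle: "\<And>u. cmod u = \<rho> \<Longrightarrow> gfun M u \<noteq> 0 \<and> gfun M u \<noteq> z0"
  shows "((\<lambda>u. z0 / (u^2 * gfun M u * (gfun M u - z0))) has_contour_integral
      2 * of_real pi * \<i> * (1 / (deriv (gfun M) w0 * w0^2) - 1 / z0^2 + of_real (moment 2)))
      (circlepath 0 \<rho>)"
proof -
  have w0_in: "w0 \<in> ball 0 (1 / R)" using w0(1) \<rho> by simp
  have \<rho>_pos: "0 < \<rho>" using w0(1) norm_ge_zero[of w0] by linarith
  have preimage: "\<exists>!w. w \<in> ball 0 (1 / R) \<and> gfun M w = z0" by (rule gfun_unique_preimage[OF z0])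
  have unique: "w = w0" if "w \<in> ball 0 (1 / R)" "gfun M w = gfun M w0" for w
    using the1_equality[OF preimage, of w] the1_equality[OF preimage, of w0] that w0_in w0(3) by simp
  have "gfun M 0 = 0" by (simp add: gfun_def)
  then obtain \<psi> where \<psi>: "\<psi> holomorphic_on ball 0 (1 / R)"
      "\<And>u. u \<in> ball 0 (1 / R) \<Longrightarrow> u \<noteq> w0 \<Longrightarrow> \<psi> u = (u - w0) / (gfun M u - z0)"
      "\<psi> w0 = 1 / deriv (gfun M) w0" "\<psi> 0 = w0 / z0" "deriv \<psi> 0 = (w0 - z0) / z0 ^ 2"
    using inverse_difference_quotient[OF gfun_holomorphic w0_in w0(2) unique w0(4) _
        gfun_has_field_derivative_0] w0(3) by metis
  have "((\<lambda>u. \<psi> u / (u^2 * (u - w0)) - (1 / u^3 - of_real (moment 2) / u + gfun_remainder u))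
      has_contour_integral
        2 * of_real pi * \<i> * ((\<psi> w0 - \<psi> 0) / w0^2 - deriv \<psi> 0 / w0) - - 2 * of_real pi * \<i> * of_real (moment 2))
      (circlepath 0 \<rho>)"
    by (intro has_contour_integral_diff circlepath_integral_double_pole_at_0[OF \<psi>(1) \<rho> w0(1,2)]
        circlepath_integral_laurent_principal_part[OF gfun_remainder_holomorphic \<rho>_pos \<rho>])
  moreover have "(\<psi> w0 - \<psi> 0) / w0^2 - deriv \<psi> 0 / w0 = 1 / (deriv (gfun M) w0 * w0^2) - 1 / z0^2"
  proof -
    have "z0 \<noteq> 0" using unique[of 0] w0(2,3) R_pos \<open>gfun M 0 = 0\<close> by auto
    then show ?thesis
      unfolding \<psi>(3-5) using w0(2,4) by (simp add: field_simps power2_eq_square)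
  qed
  ultimately have "((\<lambda>u. \<psi> u / (u^2 * (u - w0)) - (1 / u^3 - of_real (moment 2) / u + gfun_remainder u))
      has_contour_integral
        2 * of_real pi * \<i> * (1 / (deriv (gfun M) w0 * w0^2) - 1 / z0^2 + of_real (moment 2)))
      (circlepath 0 \<rho>)"
    by (simp only: right_diff_distrib distrib_left minus_mult_left[symmetric] diff_minus_eq_add)
  then show ?thesis
  proof (rule has_contour_integral_eq)
    fix u assume "u \<in> path_image (circlepath 0 \<rho>)"
    then have u: "cmod u = \<rho>" using \<rho>_pos by simp
    then have "u \<in> ball 0 (1 / R)" "u \<noteq> 0" "u \<noteq> w0" using \<rho> \<rho>_pos w0(1) by auto
    moreover have "gfun M u \<noteq> 0" "gfun M u - z0 \<noteq> 0" using circle[OF u] by auto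
    ultimately have u_facts: "u \<in> ball 0 (1 / R)" "u \<noteq> 0" "u - w0 \<noteq> 0" "gfun M u \<noteq> 0" "gfun M u - z0 \<noteq> 0"
      by auto
    have "\<psi> u / (u^2 * (u - w0)) = (u - w0) / (gfun M u - z0) / (u^2 * (u - w0))"
      using \<psi>(2)[of u] u_facts by auto
    also have "\<dots> = 1 / (u^2 * (gfun M u - z0))"
      using u_facts by (simp add: divide_divide_eq_left)
    finally have "\<psi> u / (u^2 * (u - w0)) = 1 / (u^2 * (gfun M u - z0))" .
    moreover have "1 / u^3 - of_real (moment 2) / u + gfun_remainder u = 1 / (u^2 * gfun M u)"
      using u_facts by (intro inverse_gfun_laurent[symmetric])
    moreover have "1 / (u^2 * (gfun M u - z0)) - 1 / (u^2 * gfun M u) = z0 / (u^2 * gfun M u * (gfun M u - z0))"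
      using u_facts by (simp add: field_simps)
    ultimately show "\<psi> u / (u^2 * (u - w0)) - (1 / u^3 - of_real (moment 2) / u + gfun_remainder u)
        = z0 / (u^2 * gfun M u * (gfun M u - z0))"
      by simp
  qed
qed


lemma Kfun_deriv_estimate:
  assumes z0: "0 < cmod z0" "cmod z0 < m / 4"
  obtains K' where "(Kfun M R has_field_derivative K') (at z0)"
    and "cmod (K' + 1 / z0^2 - of_real (moment 2)) \<le> 2 * cmod z0 * R / m^2"
proof -
  have z0': "cmod z0 < 9 * m / 10" using z0 m_pos by simp
  obtain w0 where w0: "cmod w0 < 1 / R" "gfun M w0 = z0" "w0 \<noteq> 0" "deriv (gfun M) w0 \<noteq> 0"
    and K': "(Kfun M R has_field_derivative - 1 / (deriv (gfun M) w0 * w0^2)) (at z0)"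
    using Kfun_has_field_derivative[OF z0(1) z0'] by blast
  obtain \<rho>0 where \<rho>0: "10 / (11 * R) \<le> \<rho>0" "\<rho>0 < 1 / R"
    and large: "\<And>w. \<rho>0 < cmod w \<Longrightarrow> cmod w < 1 / R \<Longrightarrow> 9 * m / 10 < cmod (gfun M w)"
    using gfun_gt_annulus by blast
  define \<rho> where "\<rho> = (max \<rho>0 (cmod w0) + 1 / R) / 2"
  have \<rho>: "\<rho>0 < \<rho>" "cmod w0 < \<rho>" "\<rho> < 1 / R" using \<rho>0 w0(1) by (auto simp: \<rho>_def)
  have \<rho>_pos: "0 < \<rho>" using \<rho>(2) norm_ge_zero[of w0] by linarith
  have on_circle: "9 * m / 10 < cmod (gfun M u)" if "cmod u = \<rho>" for u
    using large that \<rho> by auto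
  define E where "E = - 1 / (deriv (gfun M) w0 * w0^2) + 1 / z0^2 - of_real (moment 2)"
  define B where "B = cmod z0 / (\<rho>^2 * (9 * m / 10) * (13 * m / 20))"
  have "((\<lambda>u. z0 / (u^2 * gfun M u * (gfun M u - z0))) has_contour_integral
      2 * of_real pi * \<i> * (1 / (deriv (gfun M) w0 * w0^2) - 1 / z0^2 + of_real (moment 2)))
      (circlepath 0 \<rho>)"
  proof (rule Kfun_deriv_error_contour_integral[OF z0' \<rho>(2) w0(3,2,4) \<rho>(3)])
    fix u :: complex assume "cmod u = \<rho>"
    then show "gfun M u \<noteq> 0 \<and> gfun M u \<noteq> z0" using on_circle[of u] z0' m_pos by auto
  qed
  moreover have "cmod (z0 / (u^2 * gfun M u * (gfun M u - z0))) \<le> B" if "cmod (u - 0) = \<rho>" for u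
  proof -
    have g: "9 * m / 10 < cmod (gfun M u)" using on_circle that by simp
    have "cmod (gfun M u) \<le> cmod (gfun M u - z0) + cmod z0"
      using norm_triangle_ineq4[of "gfun M u - z0" "- z0"] by simp
    then have gz: "13 * m / 20 < cmod (gfun M u - z0)" using g z0 by simp
    have "(9 * m / 10) * (13 * m / 20) \<le> cmod (gfun M u) * cmod (gfun M u - z0)"
      using g gz m_pos by (intro mult_mono) auto
    then have "\<rho>^2 * (9 * m / 10) * (13 * m / 20) \<le> cmod (u^2 * gfun M u * (gfun M u - z0))"
      using that \<rho>_pos by (simp add: norm_mult norm_power mult.assoc)
    moreover have "0 < \<rho>^2 * (9 * m / 10) * (13 * m / 20)" using \<rho>_pos m_pos by simp
    ultimately show ?thesis
      unfolding B_def norm_divide using m_pos by (intro divide_left_mono mult_pos_pos) auto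
  qed
  ultimately have "cmod (2 * of_real pi * \<i> * (1 / (deriv (gfun M) w0 * w0^2) - 1 / z0^2 + of_real (moment 2)))
      \<le> B * (2 * pi * \<rho>)"
    using \<rho>_pos B_def by (intro has_contour_integral_bound_circlepath) auto
  moreover have "2 * of_real pi * \<i> * (1 / (deriv (gfun M) w0 * w0^2) - 1 / z0^2 + of_real (moment 2))
      = - (2 * of_real pi * \<i> * E)"
    by (simp add: E_def algebra_simps)
  ultimately have "cmod (- (2 * of_real pi * \<i> * E)) \<le> B * (2 * pi * \<rho>)"
    by (simp only:)
  then have "2 * pi * cmod E \<le> 2 * pi * (B * \<rho>)"
    by (simp only: norm_minus_cancel norm_mult norm_of_real abs_of_nonneg[OF pi_ge_zero]
        norm_ii norm_numeral mult_1_right mult_ac)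
  then have "cmod E \<le> B * \<rho>" by simp
  also have "\<dots> = (cmod z0 / m^2) * (200 / (117 * \<rho>))"
    unfolding B_def using \<rho>_pos m_pos by (simp add: field_simps power2_eq_square)
  also have "\<dots> \<le> (cmod z0 / m^2) * (2 * R)"
  proof (rule mult_left_mono)
    have "10 / (11 * R) \<le> \<rho>" using \<rho>0(1) \<rho>(1) by simp
    then have "10 / 11 \<le> R * \<rho>" using R_pos by (simp add: field_simps)
    then show "200 / (117 * \<rho>) \<le> 2 * R" using \<rho>_pos by (simp add: divide_le_eq)
  qed simp
  finally have "cmod (- 1 / (deriv (gfun M) w0 * w0^2) + 1 / z0^2 - of_real (moment 2))
      \<le> 2 * cmod z0 * R / m^2"
    by (simp add: E_def mult_ac)
  with K' show ?thesis by (rule that)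
qed

end

lemma deriv_Ksum_eq:
  fixes a :: "nat \<Rightarrow> complex"
  assumes K': "\<And>i. i < k \<Longrightarrow> (Kfun (\<mu> i) (R i) has_field_derivative K' i) (at z)"
    and "z \<noteq> 0" and "0 < k"
  shows "deriv (Ksum k \<mu> R) z = ((\<Sum>i<k. a i) - 1 / z^2) + (\<Sum>i<k. K' i + 1 / z^2 - a i)"
proof -
  have "((\<lambda>w. of_nat (k - 1) * inverse w) has_field_derivative
      of_nat (k - 1) * - (1 * inverse (z ^ Suc (Suc 0)))) (at z)"
    by (intro DERIV_cmult DERIV_inverse_fun DERIV_ident \<open>z \<noteq> 0\<close>)
  then have pole: "((\<lambda>w. of_nat (k - 1) / w) has_field_derivative - (of_nat (k - 1) / z^2)) (at z)"
    by (simp add: divide_inverse power2_eq_square)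
  have "(Ksum k \<mu> R has_field_derivative (\<Sum>i<k. K' i) - - (of_nat (k - 1) / z^2)) (at z)"
    unfolding Ksum_def[abs_def] by (intro DERIV_diff DERIV_sum K' pole) simp
  then have "deriv (Ksum k \<mu> R) z = (\<Sum>i<k. K' i) + of_nat (k - 1) / z^2"
    by (simp add: DERIV_imp_deriv)
  also have "(of_nat (k - 1) :: complex) = of_nat k - 1" using \<open>0 < k\<close> by (simp add: of_nat_diff)
  finally show ?thesis by (simp add: sum.distrib sum_subtractf algebra_simps diff_divide_distrib)
qed

lemma norm_of_real_minus_inverse_square_ge:
  fixes z :: complex and v :: real
  assumes "0 \<le> v" "z \<noteq> 0"
  shows "(1 - v * cmod z ^ 2) / cmod z ^ 2 \<le> cmod (of_real v - 1 / z^2)"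
proof -
  have "1 - v * cmod z ^ 2 \<le> cmod (of_real v * z^2 - 1)"
    using norm_triangle_ineq4[of "of_real v * z^2" "of_real v * z^2 - 1"] assms(1)
    by (simp add: norm_mult norm_power norm_minus_commute)
  then have "(1 - v * cmod z ^ 2) / cmod z ^ 2 \<le> cmod (of_real v * z^2 - 1) / cmod z ^ 2"
    by (simp add: divide_right_mono)
  also have "\<dots> = cmod ((of_real v * z^2 - 1) / z^2)" by (simp add: norm_divide norm_power)
  also have "(of_real v * z^2 - 1) / z^2 = of_real v - 1 / z^2"
    using assms(2) by (simp add: field_simps)
  finally show ?thesis .
qed

lemma radius_condition_dominance:
  fixes v D r s :: real
  assumes v: "0 < v" and D: "0 \<le> D" and r: "4 * D / v^2 \<le> r"
    and s: "0 < s" "s < 1 / sqrt v - r"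
  shows "2 * s * D < (1 - v * s^2) / s^2"
proof -
  define q where "q = sqrt v"
  have q: "0 < q" "v = q^2" using v unfolding q_def by simp_all
  define x where "x = q * s"
  have x0: "0 < x" using q s by (simp add: x_def)
  have r0: "0 \<le> r" using r D v by (smt (verit) divide_nonneg_pos zero_less_power)
  have "q * s < q * (1 / q - r)" using s(2) q(1) unfolding q_def by simp
  then have xr: "x < 1 - q * r" using q(1) unfolding x_def by (simp add: right_diff_distrib)
  then have x1: "x < 1" using r0 q by (smt (verit) mult_nonneg_nonneg)
  have "4 * D / q^3 = q * (4 * D / q^4)" using q by (simp add: field_simps power_def)
  also have "\<dots> \<le> q * r" using r q by (intro mult_left_mono) (auto simp: power_mult[symmetric])
  finally have "4 * D / q^3 < 1 - x" using xr by simp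
  also have "\<dots> \<le> 1 - x^2" using x0 x1 by (simp add: power2_eq_square mult_le_cancel_left1)
  finally have A: "4 * D / q^3 < 1 - x^2" .
  have "2 * D * x^3 \<le> 4 * D" using D x0 x1 by (smt (verit) mult_left_le power_le_one)
  then have "2 * D * s^3 \<le> 4 * D / q^3"
    using q by (simp add: x_def power_mult_distrib field_simps)
  then have "2 * D * s^3 < 1 - v * s^2"
    using A q by (simp add: x_def power_mult_distrib)
  then show ?thesis using s by (simp add: field_simps power2_eq_square power3_eq_cube)
qed

lemma Kfun_deriv_estimates:
  assumes law: "\<And>i. i < k \<Longrightarrow> cauchy_bounded_below_law (\<mu> i) (R i) (m i)"
    and z: "0 < cmod z" "\<And>i. i < k \<Longrightarrow> cmod z < m i / 4"
  obtains K' where "\<And>i. i < k \<Longrightarrow> (Kfun (\<mu> i) (R i) has_field_derivative K' i) (at z)"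
    and "\<And>i. i < k \<Longrightarrow>
      cmod (K' i + 1 / z^2 - of_real (\<integral>t. t ^ 2 \<partial>\<mu> i)) \<le> 2 * cmod z * R i / (m i)^2"
proof -
  have "\<forall>i\<in>{..<k}. \<exists>K'. (Kfun (\<mu> i) (R i) has_field_derivative K') (at z) \<and>
      cmod (K' + 1 / z^2 - of_real (\<integral>t. t ^ 2 \<partial>\<mu> i)) \<le> 2 * cmod z * R i / (m i)^2"
  proof
    fix i assume i: "i \<in> {..<k}"
    then interpret cauchy_bounded_below_law "\<mu> i" "R i" "m i" by (intro law) simp
    obtain K' where "(Kfun (\<mu> i) (R i) has_field_derivative K') (at z)"
        "cmod (K' + 1 / z^2 - of_real (moment 2)) \<le> 2 * cmod z * R i / (m i)^2"
      using Kfun_deriv_estimate[of z] z i by blast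
    then show "\<exists>K'. (Kfun (\<mu> i) (R i) has_field_derivative K') (at z) \<and>
        cmod (K' + 1 / z^2 - of_real (\<integral>t. t ^ 2 \<partial>\<mu> i)) \<le> 2 * cmod z * R i / (m i)^2"
      unfolding moment_def by blast
  qed
  then obtain K' where "\<forall>i\<in>{..<k}. (Kfun (\<mu> i) (R i) has_field_derivative K' i) (at z) \<and>
      cmod (K' i + 1 / z^2 - of_real (\<integral>t. t ^ 2 \<partial>\<mu> i)) \<le> 2 * cmod z * R i / (m i)^2"
    by (auto dest!: bchoice)
  then show ?thesis by (intro that) auto
qed

lemma deriv_Ksum_nonzero:
  fixes a :: "nat \<Rightarrow> real"
  assumes K': "\<And>i. i < k \<Longrightarrow> (Kfun (\<mu> i) (R i) has_field_derivative K' i) (at z)"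
    and err: "\<And>i. i < k \<Longrightarrow> cmod (K' i + 1 / z^2 - of_real (a i)) \<le> 2 * cmod z * R i / (m i)^2"
    and k: "0 < k" and v: "0 < (\<Sum>i<k. a i)" and D: "0 \<le> (\<Sum>i<k. R i / (m i)^2)"
    and r: "4 * (\<Sum>i<k. R i / (m i)^2) / (\<Sum>i<k. a i)^2 \<le> r"
    and z: "0 < cmod z" "cmod z < 1 / sqrt (\<Sum>i<k. a i) - r"
  shows "deriv (Ksum k \<mu> R) z \<noteq> 0"
proof -
  define v where "v = (\<Sum>i<k. a i)"
  define E where "E = (\<Sum>i<k. K' i + 1 / z^2 - of_real (a i))"
  have "z \<noteq> 0" using z by auto
  have "cmod E \<le> (\<Sum>i<k. cmod (K' i + 1 / z^2 - of_real (a i)))"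
    unfolding E_def by (rule norm_sum)
  also have "\<dots> \<le> (\<Sum>i<k. 2 * cmod z * R i / (m i)^2)"
    by (rule sum_mono) (simp add: err)
  also have "\<dots> = 2 * cmod z * (\<Sum>i<k. R i / (m i)^2)" by (simp add: sum_distrib_left)
  also have "\<dots> < (1 - v * cmod z ^ 2) / cmod z ^ 2"
    using radius_condition_dominance[OF v D r z] by (simp add: v_def)
  also have "\<dots> \<le> cmod (of_real v - 1 / z^2)"
    using norm_of_real_minus_inverse_square_ge[of v z] v \<open>z \<noteq> 0\<close> by (simp add: v_def)
  also have "\<dots> \<le> cmod (deriv (Ksum k \<mu> R) z) + cmod E"
    using norm_triangle_ineq4[of "of_real v - 1 / z^2 + E" E]
      deriv_Ksum_eq[OF K' \<open>z \<noteq> 0\<close> k, where a = "\<lambda>i. of_real (a i)"]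
    by (simp add: v_def E_def)
  finally show ?thesis by auto
qed

theorem lemma6:
  fixes k :: nat and \<mu> :: "nat \<Rightarrow> real measure"
    and L R m :: "nat \<Rightarrow> real" and r :: real
  assumes prob: "\<And>i. i < k \<Longrightarrow> prob_space (\<mu> i)"
    and borel: "\<And>i. i < k \<Longrightarrow> sets (\<mu> i) = sets borel"
    and bdd: "\<And>i. i < k \<Longrightarrow> (AE t in \<mu> i. \<bar>t\<bar> \<le> L i)"
    and mean0: "\<And>i. i < k \<Longrightarrow> (\<integral>t. t \<partial>\<mu> i) = 0"
    and RL: "\<And>i. i < k \<Longrightarrow> L i \<le> R i"
    and Rpos: "\<And>i. i < k \<Longrightarrow> 0 < R i"
    and mpos: "\<And>i. i < k \<Longrightarrow> 0 < m i"
    and Gm: "\<And>i z. i < k \<Longrightarrow> cmod z = R i \<Longrightarrow> m i \<le> cmod (cauchy_transform (\<mu> i) z)"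
    and gzero: "\<And>i. i < k \<Longrightarrow> {w. cmod w < 1 / R i \<and> gfun (\<mu> i) w = 0} = {0}"
    and i: "Min (m ` {..<k}) > 4 / sqrt (\<Sum>i<k. \<integral>t. t ^ 2 \<partial>\<mu> i)"
    and ii: "r \<ge> 4 * (\<Sum>i<k. R i / (m i)^2) / (\<Sum>i<k. \<integral>t. t ^ 2 \<partial>\<mu> i)^2"
  shows "\<forall>z. 0 < cmod z \<and> cmod z < 1 / sqrt (\<Sum>i<k. \<integral>t. t ^ 2 \<partial>\<mu> i) - r
           \<longrightarrow> deriv (Ksum k \<mu> R) z \<noteq> 0"
proof (intro allI impI)
  fix z assume z: "0 < cmod z \<and> cmod z < 1 / sqrt (\<Sum>i<k. \<integral>t. t ^ 2 \<partial>\<mu> i) - r"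
  define v where "v = (\<Sum>i<k. \<integral>t. t ^ 2 \<partial>\<mu> i)"
  define D where "D = (\<Sum>i<k. R i / (m i)^2)"
  have law: "cauchy_bounded_below_law (\<mu> i) (R i) (m i)" if "i < k" for i
  proof -
    have "AE t in \<mu> i. \<bar>t\<bar> \<le> R i" using bdd[OF that] by eventually_elim (use RL[OF that] in linarith)
    then show ?thesis
      using prob[OF that] borel[OF that] mean0[OF that] Rpos[OF that] mpos[OF that] Gm[OF that] gzero[OF that]
      unfolding cauchy_bounded_below_law_def cauchy_bounded_below_law_axioms_def
        centered_bounded_law_def centered_bounded_law_axioms_def
      by blast
  qed
  have "0 \<le> v" unfolding v_def by (intro sum_nonneg integral_nonneg_AE) simp
  have "0 \<le> D" unfolding D_def using Rpos by (intro sum_nonneg) (simp add: less_imp_le)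
  then have "0 \<le> r" using ii order.trans[of 0 "4 * D / v^2" r] by (simp add: v_def D_def)
  have "v \<noteq> 0"
  proof
    assume "v = 0"
    then have "cmod z < - r" using z by (simp add: v_def)
    then show False using \<open>0 \<le> r\<close> norm_ge_zero[of z] by linarith
  qed
  then have "0 < v" "0 < k" using \<open>0 \<le> v\<close> by (auto simp: v_def intro: Nat.gr0I)
  have small: "cmod z < m i / 4" if "i < k" for i
  proof -
    have "4 * cmod z < 4 / sqrt v" using z \<open>0 \<le> r\<close> by (simp add: v_def)
    also have "\<dots> < Min (m ` {..<k})" using i by (simp add: v_def)
    also have "\<dots> \<le> m i" using that by (intro Min_le) auto
    finally show ?thesis by simp
  qed
  obtain K' where K': "\<And>i. i < k \<Longrightarrow> (Kfun (\<mu> i) (R i) has_field_derivative K' i) (at z)"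
    and err: "\<And>i. i < k \<Longrightarrow>
      cmod (K' i + 1 / z^2 - of_real (\<integral>t. t ^ 2 \<partial>\<mu> i)) \<le> 2 * cmod z * R i / (m i)^2"
    by (rule Kfun_deriv_estimates[OF law]) (use z small in auto)
  show "deriv (Ksum k \<mu> R) z \<noteq> 0"
    by (rule deriv_Ksum_nonzero[where a = "\<lambda>i. \<integral>t. t ^ 2 \<partial>\<mu> i", OF K' err \<open>0 < k\<close>])
       (use \<open>0 < v\<close> \<open>0 \<le> D\<close> ii z in \<open>auto simp: v_def D_def\<close>)
qed

end
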